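(* Let $\mathfrak{G}\subset\mathbb{R}^3$ be the Gaussian bell-shaped surface $z=f(x,y)=\frac32e^{-(x^2+y^2)}$ with the Riemannian metric $h$ induced from $\mathbb{R}^3$, let $\bar g>0$, and let $\mathbf{G}^T=-\bar g\,\mathrm{grad}_hf=-\frac{\bar g}{q+1}\big(f_x\frac{\partial}{\partial x}+f_y\frac{\partial}{\partial y}\big)$, $q=f_x^2+f_y^2$, be the gravitational wind on $\mathfrak{G}$. Let $\tilde\eta\in[0,1]$ and let $\tilde F_{\tilde\eta}$ be the slippery-cross-slope metric on $\mathfrak{G}$, i.e. at each $(x,y)\in T\mathfrak{G}\setminus\{0\}$ the positive solution $\tilde F$ of $F(x,y-\tilde F\,\mathbf{G}^T)=\tilde F$ with $F=\frac{\alpha^2}{\alpha+\tilde\eta\bar g\beta}$, $\alpha=\sqrt{h(y,y)}$, $\beta=-\frac1{\bar g}h(y,\mathbf{G}^T)$. Then the indicatrix of $\tilde F_{\tilde\eta}$ is strongly convex on the entire surface $\mathfrak{G}$ if and only if $\bar g<\delta_2(\tilde\eta)$, where $\delta_2(\tilde\eta)=\frac{\sqrt{2e+9}}{3(1-\tilde\eta)}$ if $\tilde\eta\in[0,\frac13]$ and $\delta_2(\tilde\eta)=\frac{\sqrt{2e+9}}{6\tilde\eta}$ if $\tilde\eta\in(\frac13,1]$.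
   Context: The slippery-cross-slope metric equivalently satisfies $\tilde F\sqrt{\alpha^2+2\bar g\beta\tilde F+\|\mathbf{G}^T\|_h^2\tilde F^2}=\alpha^2+(2-\tilde\eta)\bar g\beta\tilde F+(1-\tilde\eta)\|\mathbf{G}^T\|_h^2\tilde F^2$. *)

theory Defs
  imports "HOL-Analysis.Analysis"
begin

(* Global chart of the Gaussian bell surface z = f(x,y); a point of the surface is
   given by its parameters p = (x,y), a tangent vector by its components w = (u,v)
   w.r.t. the coordinate fields d/dx, d/dy. *)

definition gauss_f :: "real \<times> real \<Rightarrow> real" where
  "gauss_f p = 3/2 * exp (-((fst p)^2 + (snd p)^2))"

definition gauss_fx :: "real \<times> real \<Rightarrow> real" where
  "gauss_fx p = -2 * fst p * gauss_f p"

definition gauss_fy :: "real \<times> real \<Rightarrow> real" where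
  "gauss_fy p = -2 * snd p * gauss_f p"

definition gauss_q :: "real \<times> real \<Rightarrow> real" where
  "gauss_q p = (gauss_fx p)^2 + (gauss_fy p)^2"

(* induced metric h from R^3: pull-back of the Euclidean metric by (x,y) |-> (x,y,f(x,y)) *)
definition hmet :: "real \<times> real \<Rightarrow> real \<times> real \<Rightarrow> real \<times> real \<Rightarrow> real" where
  "hmet p w1 w2 = fst w1 * fst w2 + snd w1 * snd w2
     + (gauss_fx p * fst w1 + gauss_fy p * snd w1) * (gauss_fx p * fst w2 + gauss_fy p * snd w2)"

definition wind :: "real \<Rightarrow> real \<times> real \<Rightarrow> real \<times> real" where
  "wind gbar p = (- gbar / (gauss_q p + 1)) *\<^sub>R (gauss_fx p, gauss_fy p)"

definition alpha :: "real \<times> real \<Rightarrow> real \<times> real \<Rightarrow> real" where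
  "alpha p w = sqrt (hmet p w w)"

definition beta :: "real \<Rightarrow> real \<times> real \<Rightarrow> real \<times> real \<Rightarrow> real" where
  "beta gbar p w = - (1 / gbar) * hmet p w (wind gbar p)"

definition Fbase :: "real \<Rightarrow> real \<Rightarrow> real \<times> real \<Rightarrow> real \<times> real \<Rightarrow> real" where
  "Fbase gbar eta p w = (alpha p w)^2 / (alpha p w + eta * gbar * beta gbar p w)"

definition slippery :: "real \<Rightarrow> real \<Rightarrow> real \<times> real \<Rightarrow> real \<times> real \<Rightarrow> real" where
  "slippery gbar eta p w = (THE t. t > 0 \<and> Fbase gbar eta p (w - t *\<^sub>R wind gbar p) = t)"

definition hessian_posdef :: "(real \<times> real \<Rightarrow> real) \<Rightarrow> real \<times> real \<Rightarrow> bool" where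
  "hessian_posdef L y \<longleftrightarrow>
     (\<exists>grad H. (\<forall>\<^sub>F z in nhds y. (L has_derivative (\<lambda>k. grad z \<bullet> k)) (at z))
        \<and> (grad has_derivative H) (at y)
        \<and> (\<forall>k. k \<noteq> 0 \<longrightarrow> H k \<bullet> k > 0))"

(* the indicatrix of the slippery-cross-slope metric is strongly convex on the whole surface:
   at every point and every nonzero tangent vector the positive solution exists uniquely,
   and the fundamental tensor (Hessian of the square of the metric) is positive definite *)
definition slippery_strongly_convex :: "real \<Rightarrow> real \<Rightarrow> bool" where
  "slippery_strongly_convex gbar eta \<longleftrightarrow>
     (\<forall>p w. w \<noteq> 0 \<longrightarrow>
        (\<exists>!t. t > 0 \<and> Fbase gbar eta p (w - t *\<^sub>R wind gbar p) = t)
        \<and> hessian_posdef (\<lambda>z. (slippery gbar eta p z)^2) w)"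

definition delta2 :: "real \<Rightarrow> real" where
  "delta2 eta = (if eta \<le> 1/3 then sqrt (2 * exp 1 + 9) / (3 * (1 - eta))
                 else sqrt (2 * exp 1 + 9) / (6 * eta))"

end

theory Submission
  imports Defs
begin

text \<open>In an \<open>h\<close>-orthonormal frame whose first vector points along the wind, \<open>h\<close> becomes the
  Euclidean metric, the wind becomes \<open>(a, 0)\<close> with \<open>a = |G\<^sup>T|\<^sub>h = gbar * sqrt (q / (1 + q))\<close>,
  and \<open>F\<close> becomes \<open>slope_norm c u = |u|\<^sup>2 / (|u| - c * u\<^sub>1)\<close> with \<open>c = eta * a\<close>.
  The slippery metric at \<open>x\<close> is the root \<open>t\<close> of \<open>slope_norm c (x - t * (a, 0)) = t\<close>, which
  exists and is unique for every \<open>x \<noteq> 0\<close> iff \<open>c < 1\<close> and \<open>a < 1 + c\<close>.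
  Through the inverse function theorem, the Hessian of \<open>t\<^sup>2\<close> is the square of a linear form plus
  a positive multiple of the Hessian of \<open>slope_norm\<close>, whose sign is that of
  \<open>|u| (1 + 2 c\<^sup>2) - 3 c u\<^sub>1\<close>; hence it is positive definite everywhere iff \<open>c < 1/2\<close>.
  Finally \<open>q = 9 r exp (-2 r)\<close> with \<open>r = x\<^sup>2 + y\<^sup>2\<close> is maximal at \<open>r = 1/2\<close>, so \<open>a\<close> ranges
  up to \<open>3 gbar / sqrt (2 e + 9)\<close>, and the conditions \<open>eta * a < 1/2\<close>, \<open>(1 - eta) * a < 1\<close>
  at this largest \<open>a\<close> amount to \<open>gbar < delta2 eta\<close>.\<close>

section \<open>The cross-slope norm in a wind-adapted frame\<close>

definition slope_norm :: "real \<Rightarrow> real \<times> real \<Rightarrow> real" where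
  "slope_norm c u = (norm u)^2 / (norm u - c * fst u)"

definition slope_norm_grad :: "real \<Rightarrow> real \<times> real \<Rightarrow> real \<times> real" where
  "slope_norm_grad c u =
     ((fst u * (norm u - 2 * c * fst u) + c * (norm u)^2) / (norm u - c * fst u)^2,
      snd u * (norm u - 2 * c * fst u) / (norm u - c * fst u)^2)"

definition slope_norm_hess :: "real \<Rightarrow> real \<times> real \<Rightarrow> real \<times> real \<Rightarrow> real \<times> real" where
  "slope_norm_hess c u v =
    (let r = norm u; D = r - c * fst u; E = r - 2 * c * fst u; P = fst u * fst v + snd u * snd v in
     ((D * E * fst v + (3 * c * fst u - r) / r * P * fst u
        - 2 * c^2 * fst u * (fst v * fst u + P) + 2 * c^2 * r^2 * fst v) / D^3,
      (D * E * snd v + (3 * c * fst u - r) / r * P * snd u - 2 * c^2 * fst u * fst v * snd u) / D^3))"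

lemma abs_fst_le_norm: "\<bar>fst (u :: real \<times> real)\<bar> \<le> norm u"
  by (metis norm_fst_le prod.collapse real_norm_def)

lemma scaled_fst_le_norm:
  fixes u :: "real \<times> real"
  shows "0 \<le> c \<Longrightarrow> c * fst u \<le> c * norm u"
  using abs_fst_le_norm[of u] by (simp add: mult_left_mono)

lemma slope_norm_denom_ge:
  fixes u :: "real \<times> real"
  shows "0 \<le> c \<Longrightarrow> (1 - c) * norm u \<le> norm u - c * fst u"
  using scaled_fst_le_norm[of c u] by (simp add: algebra_simps)

lemma slope_norm_denom_pos:
  fixes u :: "real \<times> real"
  assumes "0 \<le> c" "c < 1" "u \<noteq> 0"
  shows "norm u - c * fst u > 0"
proof -
  have "(1 - c) * norm u > 0" using assms by simp
  then show ?thesis using slope_norm_denom_ge[OF assms(1), of u] by linarith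
qed

lemma slope_norm_pos:
  fixes u :: "real \<times> real"
  shows "0 \<le> c \<Longrightarrow> c < 1 \<Longrightarrow> u \<noteq> 0 \<Longrightarrow> slope_norm c u > 0"
  using slope_norm_denom_pos[of c u] unfolding slope_norm_def by simp

lemma slope_norm_0 [simp]: "slope_norm c 0 = 0"
  by (simp add: slope_norm_def)

lemma slope_norm_scaleR: "l > 0 \<Longrightarrow> slope_norm c (l *\<^sub>R u) = l * slope_norm c u"
proof -
  assume "l > 0"
  moreover have "l * norm u - c * (l * fst u) = l * (norm u - c * fst u)"
    by (simp add: algebra_simps)
  ultimately show ?thesis
    unfolding slope_norm_def by (simp add: power2_eq_square)
qed

lemma slope_norm_neg_axis: "0 \<le> c \<Longrightarrow> v < 0 \<Longrightarrow> slope_norm c (v, 0) = - v / (1 + c)"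
proof -
  assume "0 \<le> c" "v < 0"
  moreover have "- v - c * v = - v * (1 + c)" by (simp add: algebra_simps)
  ultimately show ?thesis unfolding slope_norm_def by (simp add: power2_eq_square)
qed

lemma inner_sgn_Pair: "k \<bullet> sgn u = (fst k * fst u + snd k * snd u) / norm (u :: real \<times> real)"
  by (cases k; cases u) (simp add: sgn_div_norm inner_Pair divide_simps)

text \<open>With \<open>norm u\<close> and the denominator kept as atoms \<open>r\<close> and \<open>D\<close>, the identities about
  \<open>slope_norm\<close> and its derivatives become rational identities modulo the last two relations.\<close>

lemma slope_norm_coordinates:
  fixes u :: "real \<times> real"
  assumes "0 \<le> c" "c < 1" "u \<noteq> 0"
  obtains u1 u2 r D where "u = (u1, u2)" "norm u = r" "norm u - c * fst u = D"
    "r \<noteq> 0" "D \<noteq> 0" "r^2 = u1^2 + u2^2" "c * u1 = r - D"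
proof -
  obtain u1 u2 where u: "u = (u1, u2)" by fastforce
  have "norm u \<noteq> 0" using assms(3) by simp
  moreover have "norm u - c * fst u \<noteq> 0" using slope_norm_denom_pos[OF assms] by simp
  moreover have "(norm u)^2 = u1^2 + u2^2" unfolding u by (simp add: norm_Pair)
  moreover have "c * u1 = norm u - (norm u - c * fst u)" unfolding u by simp
  ultimately show ?thesis using that u by blast
qed

lemma has_derivative_slope_norm:
  fixes u :: "real \<times> real"
  assumes c: "0 \<le> c" "c < 1" and u: "u \<noteq> 0"
  shows "(slope_norm c has_derivative (\<lambda>k. slope_norm_grad c u \<bullet> k)) (at u)"
proof -
  obtain u1 u2 r D where uc: "u = (u1, u2)" "norm u = r" "norm u - c * fst u = D"
    and nz: "r \<noteq> 0" "D \<noteq> 0" and rel: "c * u1 = r - D"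
    using slope_norm_coordinates[OF c u] .
  have denom: "norm u - c * fst u \<noteq> 0" using nz uc by simp
  show ?thesis
    unfolding slope_norm_def[abs_def]
    apply (rule derivative_eq_intros has_derivative_norm[OF u] refl denom)+
    apply (rule ext)
    subgoal for k
    proof -
      obtain k1 k2 where k: "k = (k1, k2)" by fastforce
      show ?thesis
        unfolding slope_norm_grad_def inner_sgn_Pair uc(3) unfolding uc(2) unfolding uc(1) k fst_conv snd_conv
        using nz apply (simp add: inner_Pair field_simps)
        using rel apply algebra done
    qed
    done
qed

lemma has_derivative_slope_norm_grad:
  fixes u :: "real \<times> real"
  assumes c: "0 \<le> c" "c < 1" and u: "u \<noteq> 0"
  shows "(slope_norm_grad c has_derivative slope_norm_hess c u) (at u)"
proof -
  obtain u1 u2 r D where uc: "u = (u1, u2)" "norm u = r" "norm u - c * fst u = D"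
    and nz: "r \<noteq> 0" "D \<noteq> 0" and rel: "c * u1 = r - D"
    using slope_norm_coordinates[OF c u] .
  have denom: "(norm u - c * fst u)^2 \<noteq> 0" using nz uc by simp
  show ?thesis
    unfolding slope_norm_grad_def[abs_def]
    apply (rule derivative_eq_intros has_derivative_norm[OF u] refl denom)+
    apply (rule ext)
    subgoal for k
    proof -
      obtain k1 k2 where k: "k = (k1, k2)" by fastforce
      show ?thesis
        unfolding slope_norm_hess_def Let_def inner_sgn_Pair uc(3) unfolding uc(2)
        unfolding uc(1) k fst_conv snd_conv prod_eq_iff
        using nz apply (simp add: inner_Pair field_simps)
        using rel apply (intro conjI; algebra) done
    qed
    done
qed

lemma slope_norm_grad_inner_self:
  fixes u :: "real \<times> real"
  assumes c: "0 \<le> c" "c < 1" and u: "u \<noteq> 0"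
  shows "slope_norm_grad c u \<bullet> u = slope_norm c u"
proof -
  obtain u1 u2 r D where uc: "u = (u1, u2)" "norm u = r" "norm u - c * fst u = D"
    and nz: "r \<noteq> 0" "D \<noteq> 0" and rel: "r^2 = u1^2 + u2^2" "c * u1 = r - D"
    using slope_norm_coordinates[OF c u] .
  show ?thesis
    unfolding slope_norm_grad_def slope_norm_def uc(3) unfolding uc(2) unfolding uc(1) fst_conv snd_conv
    using nz apply (simp add: inner_Pair field_simps)
    using rel apply algebra done
qed

lemma slope_norm_hess_inner_self:
  fixes u v :: "real \<times> real"
  assumes c: "0 \<le> c" "c < 1" and u: "u \<noteq> 0"
  shows "slope_norm_hess c u v \<bullet> v = (fst u * snd v - snd u * fst v)^2
    * (norm u * (1 + 2 * c^2) - 3 * c * fst u) / (norm u * (norm u - c * fst u)^3)"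
proof -
  obtain u1 u2 r D where uc: "u = (u1, u2)" "norm u = r" "norm u - c * fst u = D"
    and nz: "r \<noteq> 0" "D \<noteq> 0" and rel: "r^2 = u1^2 + u2^2" "c * u1 = r - D"
    using slope_norm_coordinates[OF c u] .
  obtain v1 v2 where v: "v = (v1, v2)" by fastforce
  show ?thesis
    unfolding slope_norm_hess_def Let_def uc(3) unfolding uc(2) unfolding uc(1) v fst_conv snd_conv
    using nz apply (simp add: inner_Pair field_simps)
    using rel apply algebra done
qed

lemma slope_norm_hess_factor_pos:
  fixes u :: "real \<times> real"
  assumes "0 \<le> c" "c < 1/2" "u \<noteq> 0"
  shows "norm u * (1 + 2 * c^2) - 3 * c * fst u > 0"
proof -
  have "norm u * (1 + 2 * c^2) - 3 * c * norm u = norm u * ((1 - c) * (1 - 2 * c))"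
    by (simp add: algebra_simps power2_eq_square)
  moreover have "norm u * ((1 - c) * (1 - 2 * c)) > 0" using assms by simp
  ultimately show ?thesis using scaled_fst_le_norm[of c u] assms(1) by linarith
qed

lemma slope_norm_grad_wind_pos:
  fixes u :: "real \<times> real"
  assumes c: "0 \<le> c" "c < 1" and u: "u \<noteq> 0" and a: "0 \<le> a" "a < 1 + c"
  shows "1 + slope_norm_grad c u \<bullet> (a, 0) > 0"
proof -
  define G where "G = fst (slope_norm_grad c u)"
  have D: "norm u - c * fst u > 0" using slope_norm_denom_pos[OF c u] .
  have "(norm u + fst u) * (norm u * (1 + c + c^2) - (c^2 + 2 * c) * fst u) \<ge> 0"
  proof (rule mult_nonneg_nonneg)
    show "norm u + fst u \<ge> 0" using abs_fst_le_norm[of u] by linarith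
    have "(c^2 + 2 * c) * fst u \<le> (c^2 + 2 * c) * norm u"
      using scaled_fst_le_norm c by simp
    moreover have "norm u * (1 + c + c^2) - (c^2 + 2 * c) * norm u = (1 - c) * norm u"
      by (simp add: algebra_simps power2_eq_square)
    moreover have "(1 - c) * norm u \<ge> 0" using c by simp
    ultimately show "norm u * (1 + c + c^2) - (c^2 + 2 * c) * fst u \<ge> 0" by linarith
  qed
  moreover have "(1 + c) * (fst u * (norm u - 2 * c * fst u) + c * (norm u)^2) + (norm u - c * fst u)^2
     = (norm u + fst u) * (norm u * (1 + c + c^2) - (c^2 + 2 * c) * fst u)"
    by algebra
  ultimately have "(1 + c) * G + 1 \<ge> 0"
    unfolding G_def slope_norm_grad_def using D by (simp add: field_simps)
  then have G: "- G \<le> 1 / (1 + c)" using c by (simp add: field_simps)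
  have "1 + a * G > 0"
  proof (cases "G \<ge> 0")
    case True then show ?thesis using a by (simp add: add_pos_nonneg)
  next
    case False
    then have "a * (- G) \<le> a * (1 / (1 + c))" using G a by (intro mult_left_mono) auto
    also have "\<dots> < 1" using a c by (simp add: field_simps)
    finally show ?thesis by simp
  qed
  then show ?thesis unfolding G_def by (cases "slope_norm_grad c u") (simp add: inner_Pair mult.commute)
qed

lemma isCont_slope_norm:
  fixes u :: "real \<times> real"
  assumes c: "0 \<le> c" "c < 1"
  shows "isCont (slope_norm c) u"
proof (cases "u = 0")
  case True
  have "norm (slope_norm c x) \<le> norm x * (1 / (1 - c))" for x :: "real \<times> real"
  proof (cases "x = 0")
    case False
    have "slope_norm c x \<le> (norm x)^2 / ((1 - c) * norm x)"
      unfolding slope_norm_def using slope_norm_denom_ge[OF c(1), of x] slope_norm_denom_pos[OF c False] c False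
      by (intro divide_left_mono) auto
    also have "\<dots> = norm x * (1 / (1 - c))"
      using False by (simp add: power2_eq_square)
    finally show ?thesis
      using slope_norm_pos[OF c False] by simp
  qed simp
  then have "(slope_norm c \<longlongrightarrow> 0) (at 0)"
    by (intro tendsto_0_le[OF tendsto_ident_at, where K = "1 / (1 - c)"] always_eventually) auto
  then show ?thesis using True unfolding isCont_def by simp
next
  case False
  then show ?thesis using has_derivative_slope_norm[OF c False] has_derivative_continuous by blast
qed

lemma continuous_on_slope_norm: "0 \<le> c \<Longrightarrow> c < 1 \<Longrightarrow> continuous_on S (slope_norm c)"
  by (simp add: isCont_slope_norm continuous_at_imp_continuous_on)

lemma scaleR_inner_commute_if_cross_zero:
  fixes u k g :: "real \<times> real"
  assumes "fst u * snd k - snd u * fst k = 0"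
  shows "(g \<bullet> k) *\<^sub>R u = (g \<bullet> u) *\<^sub>R k"
proof -
  obtain u1 u2 k1 k2 g1 g2 where "u = (u1, u2)" "k = (k1, k2)" "g = (g1, g2)"
    by (metis prod.exhaust)
  moreover have "(g1 * k1 + g2 * k2) * u1 = (g1 * u1 + g2 * u2) * k1"
    and "(g1 * k1 + g2 * k2) * u2 = (g1 * u1 + g2 * u2) * k2"
    using assms calculation by (simp_all add: algebra_simps)
  ultimately show ?thesis by (simp add: inner_Pair)
qed

section \<open>The slippery metric in the wind-adapted frame\<close>

lemma zero_unique_if_deriv_neg_at_zeros:
  fixes \<phi> :: "real \<Rightarrow> real"
  assumes cont: "continuous_on {l<..} \<phi>"
    and deriv: "\<And>t. l < t \<Longrightarrow> \<phi> t = 0 \<Longrightarrow> \<exists>D<0. (\<phi> has_real_derivative D) (at t)"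
    and t1: "l < t1" "\<phi> t1 = 0" and t2: "l < t2" "\<phi> t2 = 0"
  shows "t1 = t2"
proof (rule ccontr)
  assume "t1 \<noteq> t2"
  then obtain t t' where t: "l < t" "t < t'" "\<phi> t = 0" "\<phi> t' = 0"
    using that[of t1 t2] that[of t2 t1] t1 t2 by (cases "t1 < t2") auto
  obtain D where "D < 0" "(\<phi> has_real_derivative D) (at t)" using deriv t(1,3) by blast
  then obtain d where d: "d > 0" "\<And>h. 0 < h \<Longrightarrow> h < d \<Longrightarrow> \<phi> (t + h) < 0"
    using DERIV_neg_dec_right t(3) by metis
  obtain \<delta> where \<delta>: "0 < \<delta>" "\<delta> \<le> d" "\<delta> \<le> t' - t"
    using d(1) t(2) by (intro that[of "min d (t' - t)"]) auto
  define s where "s = t + \<delta> / 2"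
  have s: "t < s" "s < t'" "\<phi> s < 0"
    unfolding s_def using \<delta> d(2)[of "\<delta> / 2"] by auto
  have cont_s: "continuous_on {s..t'} \<phi>"
    using cont by (rule continuous_on_subset) (use s t in auto)
  define Z where "Z = {x \<in> {s..t'}. \<phi> x = 0}"
  have "closed Z" unfolding Z_def using cont_s by (rule continuous_closed_preimage_constant) simp
  moreover have "Z \<subseteq> {s..t'}" unfolding Z_def by auto
  ultimately have "compact Z"
    by (meson bounded_subset compact_Icc compact_eq_bounded_closed compact_imp_bounded)
  moreover have "t' \<in> Z" using s t unfolding Z_def by auto
  ultimately obtain m where m: "m \<in> Z" "\<And>z. z \<in> Z \<Longrightarrow> m \<le> z"
    using compact_attains_inf[of Z] by blast
  \<comment> \<open>\<open>m\<close> is the first zero after \<open>s\<close>; since \<open>\<phi>\<close> decreases through it, \<open>\<phi>\<close> is positive just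
      before \<open>m\<close>, and the intermediate value theorem yields an earlier zero.\<close>
  have m_Z: "s \<le> m" "m \<le> t'" "\<phi> m = 0" using m(1) unfolding Z_def by auto
  with s(3) have "s < m" by (cases "s = m") auto
  obtain D' where "D' < 0" "(\<phi> has_real_derivative D') (at m)"
    using deriv m_Z(3) \<open>s < m\<close> s(1) t(1) by (meson less_trans)
  then obtain e where e: "e > 0" "\<And>h. 0 < h \<Longrightarrow> h < e \<Longrightarrow> \<phi> (m - h) > 0"
    using DERIV_neg_dec_left m_Z(3) by metis
  obtain h where h: "0 < h" "h < e" "s < m - h"
    using e(1) \<open>s < m\<close> by (intro that[of "min e (m - s) / 2"]) (auto simp: min_def field_simps)
  have "continuous_on {s..m - h} \<phi>"
    using cont_s by (rule continuous_on_subset) (use h m_Z in auto)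
  then obtain x where "s \<le> x" "x \<le> m - h" "\<phi> x = 0"
    using IVT'[of \<phi> s 0 "m - h"] s(3) e(2)[OF h(1,2)] h(3) by auto
  then have "x \<in> Z" "x < m" using m_Z h unfolding Z_def by auto
  then show False using m(2) by fastforce
qed

definition slope_slippery :: "real \<Rightarrow> real \<Rightarrow> real \<times> real \<Rightarrow> real" where
  "slope_slippery a c x = (THE t. t > 0 \<and> slope_norm c (x - t *\<^sub>R (a, 0)) = t)"

locale slope_wind =
  fixes a c :: real
  assumes c_nonneg: "0 \<le> c" and c_less_1: "c < 1"
    and a_nonneg: "0 \<le> a" and a_less: "a < 1 + c"
begin

lemmas slope_norm_assms = c_nonneg c_less_1

lemma root_unique:
  assumes t1: "t1 > 0" "slope_norm c (x - t1 *\<^sub>R (a, 0)) = t1"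
    and t2: "t2 > 0" "slope_norm c (x - t2 *\<^sub>R (a, 0)) = t2"
  shows "t1 = t2"
proof (rule zero_unique_if_deriv_neg_at_zeros)
  define \<phi> where "\<phi> = (\<lambda>s. slope_norm c (x - s *\<^sub>R (a, 0)) - s)"
  show "continuous_on {0<..} \<phi>"
    unfolding \<phi>_def
    by (intro continuous_intros continuous_on_compose2[OF continuous_on_slope_norm[OF slope_norm_assms]]) auto
  show "\<exists>D<0. (\<phi> has_real_derivative D) (at t)" if "0 < t" "\<phi> t = 0" for t
  proof -
    define u where "u = x - t *\<^sub>R (a, 0)"
    have u: "u \<noteq> 0" using that unfolding u_def \<phi>_def by auto
    obtain g1 g2 where g: "slope_norm_grad c u = (g1, g2)" by fastforce
    have "((\<lambda>s. x - s *\<^sub>R (a, 0)) has_derivative (\<lambda>h. - (h *\<^sub>R (a, 0)))) (at t)"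
      by (auto intro!: derivative_eq_intros)
    from has_derivative_diff[OF has_derivative_compose[OF this
        has_derivative_slope_norm[OF slope_norm_assms u[unfolded u_def]]] has_derivative_ident]
    have "(\<phi> has_derivative (\<lambda>h. - (1 + slope_norm_grad c u \<bullet> (a, 0)) * h)) (at t)"
      unfolding \<phi>_def u_def[symmetric]
      by (rule has_derivative_eq_rhs) (auto simp: g inner_Pair algebra_simps)
    moreover have "1 + slope_norm_grad c u \<bullet> (a, 0) > 0"
      using slope_norm_grad_wind_pos[OF slope_norm_assms u a_nonneg a_less] .
    ultimately show ?thesis
      unfolding has_field_derivative_def by (intro exI[of _ "- (1 + slope_norm_grad c u \<bullet> (a, 0))"]) simp
  qed
qed (use t1 t2 in auto)

lemma eventually_slope_norm_gt_at_right_0: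
  assumes "x \<noteq> 0"
  shows "\<forall>\<^sub>F s in at_right 0. slope_norm c (x - s *\<^sub>R (a, 0)) > s"
proof -
  have "isCont (\<lambda>s. slope_norm c (x - s *\<^sub>R (a, 0)) - s) 0"
    by (intro continuous_intros isCont_o2[OF _ isCont_slope_norm[OF slope_norm_assms]])
  moreover have "slope_norm c (x - 0 *\<^sub>R (a, 0)) - 0 > 0"
    using slope_norm_pos[OF slope_norm_assms assms] by (simp add: zero_prod_def[symmetric])
  ultimately have "\<forall>\<^sub>F s in at 0. slope_norm c (x - s *\<^sub>R (a, 0)) - s > 0"
    unfolding isCont_def by (rule order_tendstoD(1))
  then have "\<forall>\<^sub>F s in at_right 0. slope_norm c (x - s *\<^sub>R (a, 0)) - s > 0"
    by (rule filter_leD[OF at_le, rotated]) simp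
  then show ?thesis by simp
qed

text \<open>By homogeneity \<open>slope_norm c (x - T *\<^sub>R w) = T * slope_norm c (x /\<^sub>R T - w)\<close>, and
    \<open>slope_norm c (- w) = a / (1 + c) < 1\<close> for the wind \<open>w = (a, 0)\<close>.\<close>
lemma eventually_slope_norm_lt_at_top:
  "\<forall>\<^sub>F T in at_top. slope_norm c (x - T *\<^sub>R (a, 0)) < T"
proof -
  define \<psi> where "\<psi> = (\<lambda>z::real. slope_norm c (z *\<^sub>R x - (a, 0)))"
  have "isCont \<psi> 0"
    unfolding \<psi>_def by (intro continuous_intros isCont_o2[OF _ isCont_slope_norm[OF slope_norm_assms]])
  moreover have "\<psi> 0 < 1"
  proof (cases "a = 0")
    case False
    then have "\<psi> 0 = a / (1 + c)"
      unfolding \<psi>_def using slope_norm_neg_axis[OF c_nonneg, of "- a"] a_nonneg by simp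
    then show ?thesis using a_less c_nonneg by simp
  qed (simp add: \<psi>_def zero_prod_def[symmetric])
  ultimately have "\<forall>\<^sub>F z in at 0. \<psi> z < 1"
    unfolding isCont_def by (rule order_tendstoD(2))
  then have "\<forall>\<^sub>F z in at_right 0. \<psi> z < 1"
    by (rule filter_leD[OF at_le, rotated]) simp
  then have "\<forall>\<^sub>F T in at_top. \<psi> (inverse T) < 1"
    using filterlim_inverse_at_right_top unfolding filterlim_iff by blast
  then show ?thesis
  proof (rule eventually_mono[OF eventually_conj[OF _ eventually_gt_at_top[of 0]]])
    fix T :: real assume T: "\<psi> (inverse T) < 1 \<and> 0 < T"
    have "x - T *\<^sub>R (a, 0) = T *\<^sub>R (inverse T *\<^sub>R x - (a, 0))"
      using T by (simp add: algebra_simps)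
    then have "slope_norm c (x - T *\<^sub>R (a, 0)) = T * \<psi> (inverse T)"
      unfolding \<psi>_def using slope_norm_scaleR T by simp
    also have "\<dots> < T" using T by simp
    finally show "slope_norm c (x - T *\<^sub>R (a, 0)) < T" .
  qed
qed

lemma root_exists:
  assumes x: "x \<noteq> 0"
  shows "\<exists>t>0. slope_norm c (x - t *\<^sub>R (a, 0)) = t"
proof -
  define \<Phi> where "\<Phi> = (\<lambda>s. slope_norm c (x - s *\<^sub>R (a, 0)) - s)"
  obtain b where "b > 0" and b: "\<And>s. 0 < s \<Longrightarrow> s < b \<Longrightarrow> \<Phi> s > 0"
    using eventually_slope_norm_gt_at_right_0[OF x] unfolding \<Phi>_def eventually_at_right_field by auto
  define \<epsilon> where "\<epsilon> = b / 2"
  have \<epsilon>: "\<epsilon> > 0" "\<Phi> \<epsilon> > 0" unfolding \<epsilon>_def using \<open>b > 0\<close> b[of "b / 2"] by auto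
  obtain N where N: "\<And>T. N \<le> T \<Longrightarrow> \<Phi> T < 0"
    using eventually_slope_norm_lt_at_top[of x] unfolding \<Phi>_def eventually_at_top_linorder by auto
  define T where "T = max N (\<epsilon> + 1)"
  have T: "T > \<epsilon>" "\<Phi> T < 0" unfolding T_def using N by auto
  have "continuous_on {\<epsilon>..T} \<Phi>"
    unfolding \<Phi>_def
    by (intro continuous_intros continuous_on_compose2[OF continuous_on_slope_norm[OF slope_norm_assms]]) auto
  then obtain t where "\<epsilon> \<le> t" "\<Phi> t = 0"
    using IVT2'[of \<Phi> T 0 \<epsilon>] \<epsilon> T by auto
  then show ?thesis using \<epsilon> unfolding \<Phi>_def by (intro exI[of _ t]) auto
qed

lemma ex1_root: "x \<noteq> 0 \<Longrightarrow> \<exists>!t. t > 0 \<and> slope_norm c (x - t *\<^sub>R (a, 0)) = t"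
  using root_exists root_unique by blast

lemma slope_slippery_root:
  "x \<noteq> 0 \<Longrightarrow> slope_slippery a c x > 0 \<and> slope_norm c (x - slope_slippery a c x *\<^sub>R (a, 0)) = slope_slippery a c x"
  unfolding slope_slippery_def by (rule theI'[OF ex1_root])

lemma slope_slippery_eqI:
  assumes "t > 0" "slope_norm c (x - t *\<^sub>R (a, 0)) = t"
  shows "slope_slippery a c x = t"
  unfolding slope_slippery_def
proof (rule the_equality)
  show "t > 0 \<and> slope_norm c (x - t *\<^sub>R (a, 0)) = t" using assms ..
  show "s = t" if "s > 0 \<and> slope_norm c (x - s *\<^sub>R (a, 0)) = s" for s
    using root_unique[of s x t] that assms by blast
qed

text \<open>The root \<open>t\<close> of \<open>slope_norm c (y - t *\<^sub>R (a, 0)) = t\<close> is recovered from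
    \<open>u = y - t *\<^sub>R (a, 0)\<close> as \<open>t = slope_norm c u\<close>, so \<open>unshift\<close> inverts the explicit map \<open>shift\<close>
    and the derivatives of the implicit function come from the inverse function theorem.\<close>

text \<open>The wind vector is kept behind a definition, since the simplifier would otherwise turn
  \<open>s *\<^sub>R (a, 0)\<close> into \<open>(s * a, 0)\<close> and break the linear-algebra steps below.\<close>

definition wind_vec :: "real \<times> real" where
  "wind_vec = (a, 0)"

definition shift :: "real \<times> real \<Rightarrow> real \<times> real" where
  "shift u = u + slope_norm c u *\<^sub>R wind_vec"

definition unshift :: "real \<times> real \<Rightarrow> real \<times> real" where
  "unshift y = y - slope_slippery a c y *\<^sub>R wind_vec"

definition shift_factor :: "real \<times> real \<Rightarrow> real" where
  "shift_factor u = 1 + slope_norm_grad c u \<bullet> wind_vec"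

definition unshift_deriv :: "real \<times> real \<Rightarrow> real \<times> real \<Rightarrow> real \<times> real" where
  "unshift_deriv u k = k - ((slope_norm_grad c u \<bullet> k) / shift_factor u) *\<^sub>R wind_vec"

definition sq_grad :: "real \<times> real \<Rightarrow> real \<times> real" where
  "sq_grad u = (2 * slope_norm c u / shift_factor u) *\<^sub>R slope_norm_grad c u"

definition sq_grad_deriv :: "real \<times> real \<Rightarrow> real \<times> real \<Rightarrow> real \<times> real" where
  "sq_grad_deriv u v =
    ((2 * (slope_norm_grad c u \<bullet> v) * shift_factor u
       - 2 * slope_norm c u * (slope_norm_hess c u v \<bullet> wind_vec)) / (shift_factor u)^2) *\<^sub>R slope_norm_grad c u
    + (2 * slope_norm c u / shift_factor u) *\<^sub>R slope_norm_hess c u v"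

lemma shift_factor_pos: "u \<noteq> 0 \<Longrightarrow> shift_factor u > 0"
  unfolding shift_factor_def wind_vec_def using slope_norm_grad_wind_pos[OF slope_norm_assms _ a_nonneg a_less] .

lemma slope_norm_unshift: "y \<noteq> 0 \<Longrightarrow> slope_norm c (unshift y) = slope_slippery a c y"
  using slope_slippery_root unfolding unshift_def wind_vec_def by blast

lemma unshift_nonzero: "y \<noteq> 0 \<Longrightarrow> unshift y \<noteq> 0"
  using slope_slippery_root[of y] unfolding unshift_def wind_vec_def by auto

lemma shift_unshift: "y \<noteq> 0 \<Longrightarrow> shift (unshift y) = y"
  using slope_norm_unshift[of y] unfolding shift_def unshift_def by simp

lemma unshift_shift: "u \<noteq> 0 \<Longrightarrow> unshift (shift u) = u"
proof -
  assume u: "u \<noteq> 0"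
  have "slope_slippery a c (shift u) = slope_norm c u"
    by (rule slope_slippery_eqI) (use slope_norm_pos[OF slope_norm_assms u] in \<open>auto simp: shift_def wind_vec_def\<close>)
  then show ?thesis unfolding unshift_def shift_def wind_vec_def by simp
qed

lemma has_derivative_unshift:
  assumes y: "y \<noteq> 0"
  shows "(unshift has_derivative unshift_deriv (unshift y)) (at y)"
proof -
  define u where "u = unshift y"
  have u: "u \<noteq> 0" unfolding u_def by (rule unshift_nonzero[OF y])
  have "(unshift has_derivative unshift_deriv u) (at (shift u))"
  proof (rule has_derivative_inverse_strong[of "- {0}" u shift])
    show "continuous_on (- {0}) shift"
      unfolding shift_def by (intro continuous_intros continuous_on_slope_norm[OF slope_norm_assms])
    show "(shift has_derivative (\<lambda>k. k + (slope_norm_grad c u \<bullet> k) *\<^sub>R wind_vec)) (at u)"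
      unfolding shift_def
      by (rule derivative_eq_intros has_derivative_slope_norm[OF slope_norm_assms u] refl)+
    show "(\<lambda>k. k + (slope_norm_grad c u \<bullet> k) *\<^sub>R wind_vec) \<circ> unshift_deriv u = id"
    proof
      fix k
      have "slope_norm_grad c u \<bullet> unshift_deriv u k = (slope_norm_grad c u \<bullet> k) / shift_factor u"
        unfolding unshift_deriv_def using shift_factor_pos[OF u]
        by (simp add: inner_diff_right shift_factor_def field_simps)
      then show "((\<lambda>k. k + (slope_norm_grad c u \<bullet> k) *\<^sub>R wind_vec) \<circ> unshift_deriv u) k = id k"
        unfolding unshift_deriv_def by simp
    qed
  qed (use u unshift_shift in auto)
  then show ?thesis using shift_unshift[OF y] unfolding u_def by simp
qed

lemma has_derivative_slope_slippery_sq: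
  assumes y: "y \<noteq> 0"
  shows "((\<lambda>z. (slope_slippery a c z)^2) has_derivative (\<lambda>k. sq_grad (unshift y) \<bullet> k)) (at y)"
proof -
  define u where "u = unshift y"
  have u: "u \<noteq> 0" unfolding u_def by (rule unshift_nonzero[OF y])
  have "((\<lambda>z. slope_norm c (unshift z)) has_derivative (\<lambda>k. slope_norm_grad c u \<bullet> unshift_deriv u k)) (at y)"
    using has_derivative_compose[OF has_derivative_unshift[OF y] has_derivative_slope_norm[OF slope_norm_assms u[unfolded u_def]]]
    unfolding u_def .
  then have "((\<lambda>z. (slope_norm c (unshift z))^2) has_derivative (\<lambda>k. sq_grad u \<bullet> k)) (at y)"
    by (rule derivative_eq_intros refl)+
      (use shift_factor_pos[OF u] in \<open>simp add: u_def[symmetric] sq_grad_def unshift_deriv_def inner_diff_right shift_factor_def field_simps\<close>)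
  then show ?thesis
    unfolding u_def
    by (rule has_derivative_transform_within_open[where s = "- {0}"]) (use y slope_norm_unshift in auto)
qed

lemma has_derivative_sq_grad:
  assumes u: "u \<noteq> 0"
  shows "(sq_grad has_derivative sq_grad_deriv u) (at u)"
proof -
  have d: "shift_factor u > 0" by (rule shift_factor_pos[OF u])
  have "(shift_factor has_derivative (\<lambda>v. slope_norm_hess c u v \<bullet> wind_vec)) (at u)"
    unfolding shift_factor_def[abs_def]
    by (rule derivative_eq_intros has_derivative_slope_norm_grad[OF slope_norm_assms u] refl)+ simp
  from has_derivative_divide[OF has_derivative_mult_right[OF has_derivative_slope_norm[OF slope_norm_assms u], of 2] this]
  have "((\<lambda>x. 2 * slope_norm c x / shift_factor x) has_derivative
     (\<lambda>h. - (2 * slope_norm c u) * (inverse (shift_factor u) * (slope_norm_hess c u h \<bullet> wind_vec) * inverse (shift_factor u))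
       + 2 * (slope_norm_grad c u \<bullet> h) / shift_factor u)) (at u)"
    using d by simp
  from has_derivative_scaleR[OF this has_derivative_slope_norm_grad[OF slope_norm_assms u]]
  show ?thesis
    unfolding sq_grad_def[abs_def]
    by (rule has_derivative_eq_rhs) (use d in \<open>auto simp: sq_grad_deriv_def field_simps power2_eq_square\<close>)
qed

lemma sq_grad_deriv_inner:
  assumes u: "u \<noteq> 0"
  shows "sq_grad_deriv u (unshift_deriv u k) \<bullet> k = 2 * (slope_norm_grad c u \<bullet> k)^2 / (shift_factor u)^2
     + (2 * slope_norm c u / shift_factor u) * (slope_norm_hess c u (unshift_deriv u k) \<bullet> unshift_deriv u k)"
proof -
  have d: "shift_factor u > 0" by (rule shift_factor_pos[OF u])
  define v where "v = unshift_deriv u k"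
  define H where "H = slope_norm_hess c u v"
  have gv: "slope_norm_grad c u \<bullet> v = (slope_norm_grad c u \<bullet> k) / shift_factor u"
    unfolding v_def unshift_deriv_def using d by (simp add: inner_diff_right shift_factor_def field_simps)
  have Hv: "H \<bullet> v = H \<bullet> k - ((slope_norm_grad c u \<bullet> k) / shift_factor u) * (H \<bullet> wind_vec)"
    unfolding v_def unshift_deriv_def by (simp add: inner_diff_right)
  show ?thesis
    unfolding v_def[symmetric] H_def[symmetric] sq_grad_deriv_def H_def[symmetric]
    unfolding inner_add_left inner_scaleR_left gv Hv
    using d by (simp add: field_simps power2_eq_square)
qed

lemma hessian_posdef_slope_slippery_sq_iff:
  assumes y: "y \<noteq> 0"
  shows "hessian_posdef (\<lambda>z. (slope_slippery a c z)^2) y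
    \<longleftrightarrow> (\<forall>k. k \<noteq> 0 \<longrightarrow> sq_grad_deriv (unshift y) (unshift_deriv (unshift y) k) \<bullet> k > 0)"
proof
  assume "hessian_posdef (\<lambda>z. (slope_slippery a c z)^2) y"
  then obtain grad H
    where grad: "\<forall>\<^sub>F z in nhds y. ((\<lambda>z. (slope_slippery a c z)^2) has_derivative (\<lambda>k. grad z \<bullet> k)) (at z)"
      and H: "(grad has_derivative H) (at y)" and pos: "\<And>k. k \<noteq> 0 \<Longrightarrow> H k \<bullet> k > 0"
    unfolding hessian_posdef_def by blast
  have "\<forall>\<^sub>F z in nhds y. grad z = sq_grad (unshift z)"
    using grad t1_space_nhds[OF y]
  proof (rule eventually_elim2)
    fix z assume "((\<lambda>z. (slope_slippery a c z)^2) has_derivative (\<lambda>k. grad z \<bullet> k)) (at z)" "z \<noteq> 0"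
    then have "(\<lambda>k. grad z \<bullet> k) = (\<lambda>k. sq_grad (unshift z) \<bullet> k)"
      using has_derivative_unique has_derivative_slope_slippery_sq by blast
    then show "grad z = sq_grad (unshift z)" by (metis vector_eq_rdot)
  qed
  then obtain S where S: "open S" "y \<in> S" "\<And>z. z \<in> S \<Longrightarrow> grad z = sq_grad (unshift z)"
    unfolding eventually_nhds by blast
  have "((\<lambda>z. sq_grad (unshift z)) has_derivative H) (at y)"
    using has_derivative_transform_within_open[OF H S(1,2)] S(3) by simp
  then have "H = (\<lambda>k. sq_grad_deriv (unshift y) (unshift_deriv (unshift y) k))"
    using has_derivative_unique has_derivative_compose[OF has_derivative_unshift[OF y]
        has_derivative_sq_grad[OF unshift_nonzero[OF y]]] by metis
  then show "\<forall>k. k \<noteq> 0 \<longrightarrow> sq_grad_deriv (unshift y) (unshift_deriv (unshift y) k) \<bullet> k > 0"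
    using pos by simp
next
  assume "\<forall>k. k \<noteq> 0 \<longrightarrow> sq_grad_deriv (unshift y) (unshift_deriv (unshift y) k) \<bullet> k > 0"
  moreover have "\<forall>\<^sub>F z in nhds y. ((\<lambda>z. (slope_slippery a c z)^2) has_derivative (\<lambda>k. sq_grad (unshift z) \<bullet> k)) (at z)"
    using t1_space_nhds[OF y] by (rule eventually_mono) (rule has_derivative_slope_slippery_sq)
  moreover have "((\<lambda>z. sq_grad (unshift z)) has_derivative (\<lambda>k. sq_grad_deriv (unshift y) (unshift_deriv (unshift y) k))) (at y)"
    using has_derivative_compose[OF has_derivative_unshift[OF y] has_derivative_sq_grad[OF unshift_nonzero[OF y]]] .
  ultimately show "hessian_posdef (\<lambda>z. (slope_slippery a c z)^2) y"
    unfolding hessian_posdef_def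
    by (intro exI[of _ "\<lambda>z. sq_grad (unshift z)"] exI[of _ "\<lambda>k. sq_grad_deriv (unshift y) (unshift_deriv (unshift y) k)"])
      auto
qed

text \<open>By \<open>sq_grad_deriv_inner\<close>, the Hessian form is the square of the linear form
  \<open>slope_norm_grad c u\<close> plus a positive multiple of the Hessian form of \<open>slope_norm\<close> at \<open>u\<close>.
  The latter is semidefinite for \<open>c < 1/2\<close> and vanishes only in the direction \<open>u\<close>,
  where the former is positive by Euler's relation.\<close>

theorem hessian_posdef_slope_slippery_sq:
  assumes c: "c < 1/2" and y: "y \<noteq> 0"
  shows "hessian_posdef (\<lambda>z. (slope_slippery a c z)^2) y"
  unfolding hessian_posdef_slope_slippery_sq_iff[OF y]
proof (intro allI impI)
  fix k :: "real \<times> real"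
  assume k: "k \<noteq> 0"
  define u where "u = unshift y"
  have u: "u \<noteq> 0" unfolding u_def by (rule unshift_nonzero[OF y])
  have d: "shift_factor u > 0" by (rule shift_factor_pos[OF u])
  have F: "slope_norm c u > 0" by (rule slope_norm_pos[OF slope_norm_assms u])
  define Q where "Q = (norm u * (1 + 2 * c^2) - 3 * c * fst u) / (norm u * (norm u - c * fst u)^3)"
  have Q: "Q > 0"
    unfolding Q_def using slope_norm_hess_factor_pos[OF c_nonneg c u] slope_norm_denom_pos[OF slope_norm_assms u] u
    by simp
  have hess: "slope_norm_hess c u v \<bullet> v = (fst u * snd v - snd u * fst v)^2 * Q" for v
    unfolding Q_def slope_norm_hess_inner_self[OF slope_norm_assms u] by simp
  have "2 * (slope_norm_grad c u \<bullet> k)^2 / (shift_factor u)^2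
     + (2 * slope_norm c u / shift_factor u) * (slope_norm_hess c u (unshift_deriv u k) \<bullet> unshift_deriv u k) > 0"
  proof (cases "slope_norm_grad c u \<bullet> k = 0")
    case False
    moreover have "slope_norm_hess c u (unshift_deriv u k) \<bullet> unshift_deriv u k \<ge> 0"
      using hess Q by simp
    ultimately show ?thesis using d F by (simp add: add_pos_nonneg)
  next
    case True
    have "fst u * snd k - snd u * fst k \<noteq> 0"
    proof
      assume "fst u * snd k - snd u * fst k = 0"
      from scaleR_inner_commute_if_cross_zero[OF this, of "slope_norm_grad c u"]
      have "slope_norm c u *\<^sub>R k = 0"
        using True slope_norm_grad_inner_self[OF slope_norm_assms u] by simp
      then show False using F k by simp
    qed
    then have "slope_norm_hess c u k \<bullet> k > 0" using hess Q by simp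
    moreover have "unshift_deriv u k = k" unfolding unshift_deriv_def using True by simp
    ultimately show ?thesis using True d F by simp
  qed
  then show "sq_grad_deriv (unshift y) (unshift_deriv (unshift y) k) \<bullet> k > 0"
    unfolding u_def[symmetric] sq_grad_deriv_inner[OF u] .
qed

theorem not_hessian_posdef_slope_slippery_sq:
  assumes c: "1/2 \<le> c"
  shows "\<not> hessian_posdef (\<lambda>z. (slope_slippery a c z)^2) (1 - c + a, 0)"
proof -
  define x :: "real \<times> real" where "x = (1 - c + a, 0)"
  define u :: "real \<times> real" where "u = (1 - c, 0)"
  define k :: "real \<times> real" where "k = (0, 1)"
  have x: "x \<noteq> 0" and u: "u \<noteq> 0" and k: "k \<noteq> 0"
    unfolding x_def u_def k_def using c_less_1 a_nonneg by (auto simp: zero_prod_def)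
  have norm_u: "norm u = 1 - c" unfolding u_def using c_less_1 by (simp add: norm_Pair)
  have "(1 - c) - c * (1 - c) = (1 - c)^2" by (simp add: power2_eq_square algebra_simps)
  then have "slope_norm c u = 1"
    unfolding slope_norm_def norm_u using c_less_1 by (simp add: u_def)
  then have "slope_slippery a c x = 1"
    by (intro slope_slippery_eqI) (auto simp: x_def u_def)
  then have ux: "unshift x = u" unfolding unshift_def wind_vec_def x_def u_def by simp
  have grad_k: "slope_norm_grad c u \<bullet> k = 0" unfolding slope_norm_grad_def k_def u_def by (simp add: inner_Pair)
  then have "unshift_deriv u k = k" unfolding unshift_deriv_def by simp
  moreover have "slope_norm_hess c u k \<bullet> k \<le> 0"
  proof -
    have "norm u * (1 + 2 * c^2) - 3 * c * fst u = (1 - c) * ((1 - c) * (1 - 2 * c))"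
      unfolding norm_u by (simp add: u_def algebra_simps power2_eq_square)
    moreover have "(1 - c) * ((1 - c) * (1 - 2 * c)) \<le> 0"
      using c c_less_1 by (intro mult_nonneg_nonpos) auto
    moreover have "norm u * (norm u - c * fst u)^3 > 0"
      using slope_norm_denom_pos[OF slope_norm_assms u] u by simp
    ultimately show ?thesis
      unfolding slope_norm_hess_inner_self[OF slope_norm_assms u]
      by (simp add: divide_nonpos_pos mult_nonneg_nonpos)
  qed
  ultimately have "\<not> sq_grad_deriv u (unshift_deriv u k) \<bullet> k > 0"
    using sq_grad_deriv_inner[OF u, of k] grad_k shift_factor_pos[OF u] slope_norm_pos[OF slope_norm_assms u]
    by (simp add: not_less mult_nonneg_nonpos divide_nonpos_pos)
  then have "\<not> hessian_posdef (\<lambda>z. (slope_slippery a c z)^2) x"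
    unfolding hessian_posdef_slope_slippery_sq_iff[OF x] ux using k by blast
  then show ?thesis unfolding x_def .
qed

end

definition slope_slippery_strongly_convex :: "real \<Rightarrow> real \<Rightarrow> bool" where
  "slope_slippery_strongly_convex a c \<longleftrightarrow>
     (\<forall>x. x \<noteq> 0 \<longrightarrow>
        (\<exists>!t. t > 0 \<and> slope_norm c (x - t *\<^sub>R (a, 0)) = t)
        \<and> hessian_posdef (\<lambda>z. (slope_slippery a c z)^2) x)"

lemma no_root_against_strong_wind:
  assumes "0 \<le> c" "1 + c \<le> a"
  shows "\<not> (\<exists>t>0. slope_norm c ((-1, 0) - t *\<^sub>R (a, 0)) = t)"
proof
  assume "\<exists>t>0. slope_norm c ((-1, 0) - t *\<^sub>R (a, 0)) = t"
  then obtain t where t: "t > 0" "slope_norm c (- 1 - t * a, 0) = t" by auto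
  have "- 1 - t * a < 0" using mult_nonneg_nonneg[of t a] t assms by linarith
  with t have "(1 + t * a) / (1 + c) = t" using slope_norm_neg_axis[OF assms(1)] by (simp add: add.commute)
  then have "1 + t * a = t * (1 + c)" using assms(1) by (simp add: field_simps)
  moreover have "t * (1 + c) \<le> t * a" using t assms by simp
  ultimately show False by simp
qed

lemma no_root_along_wind_if_c_ge_1:
  assumes "1 \<le> c" "a < 1 + c"
  shows "\<not> (\<exists>t>0. slope_norm c ((1, 0) - t *\<^sub>R (a, 0)) = t)"
proof
  assume "\<exists>t>0. slope_norm c ((1, 0) - t *\<^sub>R (a, 0)) = t"
  then obtain t where t: "t > 0" "slope_norm c (1 - t * a, 0) = t" by auto
  consider "1 - t * a < 0" | "1 - t * a \<ge> 0" by linarith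
  then show False
  proof cases
    case 1
    with t have "t * a - 1 = t * (1 + c)"
      using slope_norm_neg_axis[of c "1 - t * a"] assms(1) by (simp add: field_simps)
    moreover have "t * a < t * (1 + c)" using t assms by simp
    ultimately show False by simp
  next
    case 2
    have "slope_norm c (1 - t * a, 0) = (1 - t * a)^2 / ((1 - t * a) * (1 - c))"
      using 2 unfolding slope_norm_def by (simp add: norm_Pair algebra_simps)
    also have "\<dots> \<le> 0" using 2 assms(1) by (simp add: divide_nonneg_nonpos mult_nonneg_nonpos)
    finally show False using t by simp
  qed
qed

theorem slope_slippery_strongly_convex_iff:
  assumes a: "0 \<le> a" and c: "0 \<le> c"
  shows "slope_slippery_strongly_convex a c \<longleftrightarrow> c < 1/2 \<and> a < 1 + c"
proof
  assume conv: "slope_slippery_strongly_convex a c"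
  have root: "\<exists>t>0. slope_norm c (x - t *\<^sub>R (a, 0)) = t" if "x \<noteq> 0" for x
    using conv that unfolding slope_slippery_strongly_convex_def by blast
  have "a < 1 + c"
  proof (rule ccontr)
    assume "\<not> a < 1 + c"
    then show False
      using root[of "(-1, 0)"] no_root_against_strong_wind[OF c, of a] by (simp add: zero_prod_def)
  qed
  moreover have "c < 1"
  proof (rule ccontr)
    assume "\<not> c < 1"
    then show False
      using root[of "(1, 0)"] no_root_along_wind_if_c_ge_1[of c a] \<open>a < 1 + c\<close> by (simp add: zero_prod_def)
  qed
  moreover have "c < 1/2"
  proof (rule ccontr)
    assume "\<not> c < 1/2"
    interpret slope_wind a c using a c \<open>c < 1\<close> \<open>a < 1 + c\<close> by unfold_locales
    have "(1 - c + a, 0) \<noteq> (0 :: real \<times> real)" using a \<open>c < 1\<close> by (simp add: zero_prod_def)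
    then show False
      using conv not_hessian_posdef_slope_slippery_sq \<open>\<not> c < 1/2\<close>
      unfolding slope_slippery_strongly_convex_def by simp
  qed
  ultimately show "c < 1/2 \<and> a < 1 + c" by simp
next
  assume "c < 1/2 \<and> a < 1 + c"
  then interpret slope_wind a c using a c by unfold_locales auto
  show "slope_slippery_strongly_convex a c"
    unfolding slope_slippery_strongly_convex_def
    using ex1_root hessian_posdef_slope_slippery_sq \<open>c < 1/2 \<and> a < 1 + c\<close> by blast
qed

section \<open>Transfer to the Gaussian surface\<close>

lemma hessian_posdef_compose_linear:
  fixes A :: "real \<times> real \<Rightarrow> real \<times> real"
  assumes lin: "linear A" and inj: "inj A" and pd: "hessian_posdef L (A x)"
  shows "hessian_posdef (\<lambda>z. L (A z)) x"
proof -
  obtain grad H where grad: "\<forall>\<^sub>F z in nhds (A x). (L has_derivative (\<lambda>k. grad z \<bullet> k)) (at z)"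
    and H: "(grad has_derivative H) (at (A x))" and pos: "\<And>k. k \<noteq> 0 \<Longrightarrow> H k \<bullet> k > 0"
    using pd unfolding hessian_posdef_def by blast
  have dA: "(A has_derivative A) (at z)" for z
    using lin by (simp add: linear_conv_bounded_linear bounded_linear_imp_has_derivative)
  have dA': "(adjoint A has_derivative adjoint A) (at z)" for z
    using adjoint_linear[OF lin] by (simp add: linear_conv_bounded_linear bounded_linear_imp_has_derivative)
  have adj: "v \<bullet> A k = adjoint A v \<bullet> k" for v k
    using adjoint_works[OF lin] by (simp add: inner_commute)
  have "isCont A x" using dA has_derivative_continuous by blast
  then have "filterlim A (nhds (A x)) (nhds x)" by (simp add: isCont_def tendsto_at_iff_tendsto_nhds)
  then have "\<forall>\<^sub>F z in nhds x. (L has_derivative (\<lambda>k. grad (A z) \<bullet> k)) (at (A z))"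
    using grad unfolding filterlim_iff by blast
  then have "\<forall>\<^sub>F z in nhds x. ((\<lambda>z. L (A z)) has_derivative (\<lambda>k. adjoint A (grad (A z)) \<bullet> k)) (at z)"
  proof (rule eventually_mono)
    fix z assume "(L has_derivative (\<lambda>k. grad (A z) \<bullet> k)) (at (A z))"
    from has_derivative_compose[OF dA this]
    show "((\<lambda>z. L (A z)) has_derivative (\<lambda>k. adjoint A (grad (A z)) \<bullet> k)) (at z)"
      by (simp add: adj)
  qed
  moreover have "((\<lambda>z. adjoint A (grad (A z))) has_derivative (\<lambda>k. adjoint A (H (A k)))) (at x)"
    using has_derivative_compose[OF has_derivative_compose[OF dA H] dA'] .
  moreover have "adjoint A (H (A k)) \<bullet> k > 0" if "k \<noteq> 0" for k
    using pos[of "A k"] that inj linear_0[OF lin] adj by (metis injD)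
  ultimately show ?thesis
    unfolding hessian_posdef_def
    by (intro exI[of _ "\<lambda>z. adjoint A (grad (A z))"] exI[of _ "\<lambda>k. adjoint A (H (A k))"]) auto
qed

text \<open>An \<open>h\<close>-orthonormal frame at \<open>p\<close> whose first vector points along the wind
    \<open>-(f\<^sub>x, f\<^sub>y)\<close>; at the summit, where the wind vanishes, any orthonormal frame will do.\<close>

definition frame1 :: "real \<times> real \<Rightarrow> real \<times> real" where
  "frame1 p = (if gauss_q p = 0 then (1, 0)
     else (- 1 / (sqrt (gauss_q p) * sqrt (1 + gauss_q p))) *\<^sub>R (gauss_fx p, gauss_fy p))"

definition frame2 :: "real \<times> real \<Rightarrow> real \<times> real" where
  "frame2 p = (if gauss_q p = 0 then (0, 1) else (1 / sqrt (gauss_q p)) *\<^sub>R (- gauss_fy p, gauss_fx p))"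

definition frame_map :: "real \<times> real \<Rightarrow> real \<times> real \<Rightarrow> real \<times> real" where
  "frame_map p x = fst x *\<^sub>R frame1 p + snd x *\<^sub>R frame2 p"

definition frame_coords :: "real \<times> real \<Rightarrow> real \<times> real \<Rightarrow> real \<times> real" where
  "frame_coords p y = (hmet p y (frame1 p), hmet p y (frame2 p))"

definition wind_speed :: "real \<Rightarrow> real \<times> real \<Rightarrow> real" where
  "wind_speed gbar p = gbar * sqrt (gauss_q p / (1 + gauss_q p))"

lemma hmet_commute: "hmet p u v = hmet p v u"
  unfolding hmet_def by (simp add: algebra_simps)

lemma hmet_left_linear: "hmet p (s *\<^sub>R u + t *\<^sub>R v) z = s * hmet p u z + t * hmet p v z"
  unfolding hmet_def by (simp add: algebra_simps)

lemma hmet_right_linear: "hmet p z (s *\<^sub>R u + t *\<^sub>R v) = s * hmet p z u + t * hmet p z v"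
  using hmet_left_linear hmet_commute by metis

lemma gauss_q_nonneg: "gauss_q p \<ge> 0"
  unfolding gauss_q_def by simp

lemma frame_in_sqrt_coordinates:
  assumes "gauss_q p \<noteq> 0"
  obtains s m where "s > 0" "s^2 = gauss_q p" "m > 0" "m^2 = 1 + gauss_q p"
    "frame1 p = (- gauss_fx p / (s * m), - gauss_fy p / (s * m))"
    "frame2 p = (- gauss_fy p / s, gauss_fx p / s)"
proof
  show "sqrt (gauss_q p) > 0" "(sqrt (gauss_q p))^2 = gauss_q p"
    "sqrt (1 + gauss_q p) > 0" "(sqrt (1 + gauss_q p))^2 = 1 + gauss_q p"
    using assms gauss_q_nonneg[of p] by (auto simp: add_nonneg_pos)
qed (use assms in \<open>simp_all add: frame1_def frame2_def\<close>)

lemma frame_orthonormal: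
  "hmet p (frame1 p) (frame1 p) = 1" "hmet p (frame1 p) (frame2 p) = 0"
  "hmet p (frame2 p) (frame1 p) = 0" "hmet p (frame2 p) (frame2 p) = 1"
proof -
  have q: "gauss_q p = (gauss_fx p)^2 + (gauss_fy p)^2" unfolding gauss_q_def ..
  have "hmet p (frame1 p) (frame1 p) = 1 \<and> hmet p (frame1 p) (frame2 p) = 0 \<and> hmet p (frame2 p) (frame2 p) = 1"
  proof (cases "gauss_q p = 0")
    case True
    then have "gauss_fx p = 0" "gauss_fy p = 0" using q by (auto simp: add_nonneg_eq_0_iff)
    then show ?thesis using True unfolding frame1_def frame2_def hmet_def by simp
  next
    case False
    then obtain s m where s: "s > 0" "s^2 = gauss_q p" and m: "m > 0" "m^2 = 1 + gauss_q p"
      and frame: "frame1 p = (- gauss_fx p / (s * m), - gauss_fy p / (s * m))"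
        "frame2 p = (- gauss_fy p / s, gauss_fx p / s)"
      by (rule frame_in_sqrt_coordinates)
    have "hmet p (frame1 p) (frame1 p) = (gauss_q p + (gauss_q p)^2) / (s^2 * m^2)"
      unfolding hmet_def frame q using s(1) m(1) by (simp add: field_simps power2_eq_square)
    also have "\<dots> = 1"
    proof -
      have "gauss_q p > 0" using False gauss_q_nonneg[of p] by simp
      then have "gauss_q p + (gauss_q p)^2 > 0" by (simp add: add_pos_nonneg)
      then show ?thesis unfolding s(2) m(2) by (simp add: power2_eq_square distrib_left)
    qed
    finally have "hmet p (frame1 p) (frame1 p) = 1" .
    moreover have "hmet p (frame1 p) (frame2 p) = 0"
      unfolding hmet_def frame using s(1) m(1) by (simp add: field_simps power2_eq_square)
    moreover have "hmet p (frame2 p) (frame2 p) = gauss_q p / s^2"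
      unfolding hmet_def frame q using s(1) by (simp add: field_simps power2_eq_square)
    ultimately show ?thesis using s False by simp
  qed
  then show "hmet p (frame1 p) (frame1 p) = 1" "hmet p (frame1 p) (frame2 p) = 0"
    "hmet p (frame2 p) (frame1 p) = 0" "hmet p (frame2 p) (frame2 p) = 1"
    using hmet_commute by metis+
qed

lemma hmet_frame_map: "hmet p (frame_map p x) (frame_map p y) = x \<bullet> y"
  unfolding frame_map_def hmet_left_linear hmet_right_linear frame_orthonormal
  by (cases x; cases y) (simp add: inner_Pair)

lemma wind_frame_map: "gbar > 0 \<Longrightarrow> wind gbar p = frame_map p (wind_speed gbar p, 0)"
proof (cases "gauss_q p = 0")
  case True
  then have "gauss_fx p = 0" "gauss_fy p = 0"
    unfolding gauss_q_def by (auto simp: add_nonneg_eq_0_iff)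
  then show ?thesis using True unfolding frame_map_def wind_def wind_speed_def by (simp add: zero_prod_def)
next
  case False
  assume "gbar > 0"
  obtain s m where s: "s > 0" "s^2 = gauss_q p" and m: "m > 0" "m^2 = 1 + gauss_q p"
    and frame: "frame1 p = (- gauss_fx p / (s * m), - gauss_fy p / (s * m))"
    using frame_in_sqrt_coordinates[OF False] by metis
  have speed: "wind_speed gbar p = gbar * s / m"
    unfolding wind_speed_def m(2)[symmetric] unfolding s(2)[symmetric]
    using s(1) m(1) by (simp add: real_sqrt_divide)
  have "gauss_q p + 1 = m^2" using m(2) by simp
  then show ?thesis
    unfolding frame_map_def frame wind_def speed using s(1) m(1)
    by (simp add: field_simps power2_eq_square)
qed

lemma linear_frame_map: "linear (frame_map p)"
  unfolding frame_map_def by (intro linearI) (auto simp: algebra_simps)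

lemma linear_frame_coords: "linear (frame_coords p)"
  unfolding frame_coords_def hmet_def by (intro linearI) (auto simp: algebra_simps)

lemma frame_coords_frame_map: "frame_coords p (frame_map p x) = x"
  unfolding frame_coords_def frame_map_def hmet_left_linear frame_orthonormal by simp

lemma frame_map_frame_coords: "frame_map p (frame_coords p y) = y"
proof -
  have "inj (frame_map p)" by (metis frame_coords_frame_map injI)
  then have "surj (frame_map p)" by (rule eucl.linear_inj_imp_surj[OF linear_frame_map])
  then obtain x where "y = frame_map p x" by blast
  then show ?thesis using frame_coords_frame_map by simp
qed

lemma inj_frame_map: "inj (frame_map p)"
  by (metis frame_coords_frame_map injI)

lemma inj_frame_coords: "inj (frame_coords p)"
  by (metis frame_map_frame_coords injI)

lemma frame_map_eq_0_iff [simp]: "frame_map p x = 0 \<longleftrightarrow> x = 0"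
  using inj_frame_map linear_0[OF linear_frame_map] by (metis injD)

lemma all_nonzero_frame_map_iff:
  fixes P :: "real \<times> real \<Rightarrow> bool"
  shows "(\<forall>w. w \<noteq> 0 \<longrightarrow> P w) \<longleftrightarrow> (\<forall>x. x \<noteq> 0 \<longrightarrow> P (frame_map p x))"
proof (intro iffI allI impI)
  fix w :: "real \<times> real"
  assume P: "\<forall>x. x \<noteq> 0 \<longrightarrow> P (frame_map p x)" and "w \<noteq> 0"
  then have "frame_coords p w \<noteq> 0" using frame_map_eq_0_iff frame_map_frame_coords by metis
  then show "P w" using P[rule_format, of "frame_coords p w"] by (simp add: frame_map_frame_coords)
qed (use frame_map_eq_0_iff in blast)

lemma Fbase_frame_map:
  assumes "gbar > 0"
  shows "Fbase gbar eta p (frame_map p x - t *\<^sub>R wind gbar p)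
    = slope_norm (eta * wind_speed gbar p) (x - t *\<^sub>R (wind_speed gbar p, 0))"
proof -
  define z where "z = x - t *\<^sub>R (wind_speed gbar p, 0)"
  have z: "frame_map p x - t *\<^sub>R wind gbar p = frame_map p z"
    unfolding z_def wind_frame_map[OF assms] linear_diff[OF linear_frame_map] linear_scale[OF linear_frame_map] ..
  have "alpha p (frame_map p z) = norm z"
    unfolding alpha_def hmet_frame_map by (simp add: norm_eq_sqrt_inner)
  moreover have "eta * gbar * beta gbar p (frame_map p z) = - (eta * wind_speed gbar p * fst z)"
    unfolding beta_def wind_frame_map[OF assms] hmet_frame_map using assms by (cases z) (simp add: inner_Pair)
  ultimately show ?thesis unfolding z z_def[symmetric] Fbase_def slope_norm_def by simp
qed

lemma slippery_frame_map:
  "gbar > 0 \<Longrightarrow> slippery gbar eta p (frame_map p x) = slope_slippery (wind_speed gbar p) (eta * wind_speed gbar p) x"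
  unfolding slippery_def slope_slippery_def using Fbase_frame_map by simp

lemma hessian_posdef_slippery_frame_map_iff:
  assumes "gbar > 0"
  shows "hessian_posdef (\<lambda>z. (slippery gbar eta p z)^2) (frame_map p x)
    \<longleftrightarrow> hessian_posdef (\<lambda>z. (slope_slippery (wind_speed gbar p) (eta * wind_speed gbar p) z)^2) x"
  (is "hessian_posdef ?L _ \<longleftrightarrow> hessian_posdef ?M _")
proof
  assume "hessian_posdef ?L (frame_map p x)"
  from hessian_posdef_compose_linear[OF linear_frame_map inj_frame_map this]
  show "hessian_posdef ?M x" unfolding slippery_frame_map[OF assms] .
next
  assume "hessian_posdef ?M x"
  then have "hessian_posdef ?M (frame_coords p (frame_map p x))" by (simp only: frame_coords_frame_map)
  from hessian_posdef_compose_linear[OF linear_frame_coords inj_frame_coords this]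
  show "hessian_posdef ?L (frame_map p x)"
    using slippery_frame_map[OF assms, symmetric] by (simp add: frame_map_frame_coords)
qed

theorem slippery_strongly_convex_iff_slope:
  assumes "gbar > 0"
  shows "slippery_strongly_convex gbar eta
    \<longleftrightarrow> (\<forall>p. slope_slippery_strongly_convex (wind_speed gbar p) (eta * wind_speed gbar p))"
proof -
  have "(\<forall>w. w \<noteq> 0 \<longrightarrow> (\<exists>!t. t > 0 \<and> Fbase gbar eta p (w - t *\<^sub>R wind gbar p) = t)
          \<and> hessian_posdef (\<lambda>z. (slippery gbar eta p z)^2) w)
    \<longleftrightarrow> (\<forall>x. x \<noteq> 0 \<longrightarrow> (\<exists>!t. t > 0 \<and> Fbase gbar eta p (frame_map p x - t *\<^sub>R wind gbar p) = t)
          \<and> hessian_posdef (\<lambda>z. (slippery gbar eta p z)^2) (frame_map p x))" for p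
    by (rule all_nonzero_frame_map_iff)
  note pointwise = this[unfolded Fbase_frame_map[OF assms] hessian_posdef_slippery_frame_map_iff[OF assms]]
  show ?thesis
    unfolding slippery_strongly_convex_def slope_slippery_strongly_convex_def pointwise ..
qed

section \<open>The strongest wind on the Gaussian bell\<close>

definition max_wind_speed :: "real \<Rightarrow> real" where
  "max_wind_speed gbar = 3 * gbar / sqrt (2 * exp 1 + 9)"

lemma gauss_q_radial:
  "gauss_q p = 9 * ((fst p)^2 + (snd p)^2) * exp (- 2 * ((fst p)^2 + (snd p)^2))"
proof -
  define r where "r = (fst p)^2 + (snd p)^2"
  have f: "(gauss_f p)^2 = 9 / 4 * exp (- 2 * r)"
    unfolding gauss_f_def r_def by (simp add: power2_eq_square exp_add[symmetric])
  have "gauss_q p = 4 * r * (gauss_f p)^2"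
    unfolding gauss_q_def gauss_fx_def gauss_fy_def r_def by (simp add: power2_eq_square algebra_simps)
  also have "\<dots> = 9 * r * exp (- 2 * r)" unfolding f by simp
  finally show ?thesis unfolding r_def .
qed

lemma gauss_q_le: "gauss_q p \<le> 9 / (2 * exp 1)"
proof -
  define r where "r = (fst p)^2 + (snd p)^2"
  have "2 * r \<le> exp (2 * r - 1)" using exp_ge_add_one_self[of "2 * r - 1"] by simp
  then have "2 * r * exp 1 \<le> exp (2 * r)" by (simp add: exp_diff field_simps)
  then have "2 * r * exp 1 * exp (- 2 * r) \<le> 1"
    by (metis exp_minus_inverse mult.assoc mult_right_mono exp_ge_zero mult_minus_left)
  then have "r * exp (- 2 * r) \<le> 1 / (2 * exp 1)" by (simp add: field_simps)
  then show ?thesis unfolding gauss_q_radial r_def[symmetric] by simp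
qed

lemma gauss_q_steepest: "gauss_q (1 / sqrt 2, 0) = 9 / (2 * exp 1)"
  unfolding gauss_q_radial by (simp add: power_divide exp_minus field_simps)

lemma wind_speed_nonneg: "gbar > 0 \<Longrightarrow> wind_speed gbar p \<ge> 0"
  unfolding wind_speed_def using gauss_q_nonneg[of p] by simp

lemma wind_speed_le_max: "gbar > 0 \<Longrightarrow> wind_speed gbar p \<le> max_wind_speed gbar"
proof -
  assume "gbar > 0"
  have mono: "x / (1 + x) \<le> y / (1 + y)" if "0 \<le> x" "x \<le> y" for x y :: real
    using that by (simp add: field_simps)
  have "gauss_q p / (1 + gauss_q p) \<le> (9 / (2 * exp 1)) / (1 + 9 / (2 * exp 1))"
    by (rule mono[OF gauss_q_nonneg gauss_q_le])
  also have "\<dots> = 9 / (2 * exp 1 + 9)" by (simp add: field_simps)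
  finally have "sqrt (gauss_q p / (1 + gauss_q p)) \<le> sqrt (9 / (2 * exp 1 + 9))"
    by (rule real_sqrt_le_mono)
  also have "\<dots> = 3 / sqrt (2 * exp 1 + 9)"
    using real_sqrt_unique[of 3 9] by (simp add: real_sqrt_divide)
  finally have bound: "sqrt (gauss_q p / (1 + gauss_q p)) \<le> 3 / sqrt (2 * exp 1 + 9)" .
  show ?thesis
    unfolding wind_speed_def max_wind_speed_def
    using mult_left_mono[OF bound, of gbar] \<open>gbar > 0\<close> by (simp add: mult.commute)
qed

lemma wind_speed_steepest: "wind_speed gbar (1 / sqrt 2, 0) = max_wind_speed gbar"
proof -
  have "(9 / (2 * exp 1)) / (1 + 9 / (2 * exp 1)) = 9 / (2 * exp 1 + (9::real))"
    by (simp add: field_simps)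
  then show ?thesis
    unfolding wind_speed_def max_wind_speed_def gauss_q_steepest by (simp add: real_sqrt_divide)
qed

lemma less_delta2_iff:
  assumes "gbar > 0" "0 \<le> eta" "eta \<le> 1"
  shows "gbar < delta2 eta \<longleftrightarrow> eta * max_wind_speed gbar < 1/2 \<and> (1 - eta) * max_wind_speed gbar < 1"
proof -
  define S where "S = sqrt (2 * exp 1 + 9)"
  have S: "S > 0" unfolding S_def by (simp add: add_pos_nonneg)
  have "eta * max_wind_speed gbar < 1/2 \<longleftrightarrow> 6 * eta * gbar < S"
    and "(1 - eta) * max_wind_speed gbar < 1 \<longleftrightarrow> 3 * (1 - eta) * gbar < S"
    unfolding max_wind_speed_def S_def[symmetric] using S by (simp_all add: field_simps)
  moreover have "6 * eta * gbar \<le> 3 * (1 - eta) * gbar" if "eta \<le> 1/3"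
    using that assms by (intro mult_right_mono) auto
  moreover have "3 * (1 - eta) * gbar \<le> 6 * eta * gbar" if "\<not> eta \<le> 1/3"
    using that assms by (intro mult_right_mono) auto
  moreover have "gbar < S / (3 * (1 - eta)) \<longleftrightarrow> 3 * (1 - eta) * gbar < S" if "eta \<le> 1/3"
    using that by (simp add: pos_less_divide_eq mult.commute)
  moreover have "gbar < S / (6 * eta) \<longleftrightarrow> 6 * eta * gbar < S" if "\<not> eta \<le> 1/3"
    using that by (simp add: pos_less_divide_eq mult.commute)
  ultimately show ?thesis unfolding delta2_def S_def[symmetric] by auto
qed

theorem lemma5p1:
  fixes gbar eta :: real
  assumes "gbar > 0" and "0 \<le> eta" and "eta \<le> 1"
  shows "slippery_strongly_convex gbar eta \<longleftrightarrow> gbar < delta2 eta"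
proof -
  let ?admissible = "\<lambda>a::real. eta * a < 1/2 \<and> (1 - eta) * a < 1"
  have "slippery_strongly_convex gbar eta \<longleftrightarrow> (\<forall>p. ?admissible (wind_speed gbar p))"
    using slippery_strongly_convex_iff_slope[OF assms(1)] slope_slippery_strongly_convex_iff
      wind_speed_nonneg[OF assms(1)] assms(2) by (simp add: algebra_simps)
  also have "\<dots> \<longleftrightarrow> ?admissible (max_wind_speed gbar)"
  proof
    show "?admissible (max_wind_speed gbar)" if "\<forall>p. ?admissible (wind_speed gbar p)"
      using that wind_speed_steepest by metis
    show "\<forall>p. ?admissible (wind_speed gbar p)" if "?admissible (max_wind_speed gbar)"
      using that wind_speed_le_max[OF assms(1)] assms(2,3)
      by (meson le_less_trans mult_left_mono diff_ge_0_iff_ge)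
  qed
  also have "\<dots> \<longleftrightarrow> gbar < delta2 eta"
    using less_delta2_iff[OF assms] by simp
  finally show ?thesis .
qed

end
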